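(* Let $M>0$ and let $(q(t),p(t))$ with $q(t)>0$ be a solution of Hamilton's equations $\dot q=\partial\mathcal H/\partial p$, $\dot p=-\partial\mathcal H/\partial q$ for the single rotating circular peakon Hamiltonian $\mathcal H(p,q)=\frac12\big(p^2+\frac{M^2}{q^2}\big)G(q,q)$, and let $E=\big(p^2+\frac{M^2}{q^2}\big)G(q,q)>0$ be its (conserved) value along the solution. Then there is a unique $q_*=q_*(M,E)>0$ satisfying $$q_*=M\sqrt{\frac{G(q_*,q_* )}{E}},$$ and $q(t)\ge q_*$ for all $t$ in the interval of existence; in particular the peakon circle never collapses to the origin.
   Context: $G(q,q)=I_1(q)K_1(q)$, where $I_1,K_1$ are the modified Bessel functions of order one; more generally $G(r,\xi)=I_1(\min(r,\xi))K_1(\max(r,\xi))$ is the Green's function of the radial Helmholtz operator $1-\frac1r\partial_r r\partial_r+\frac1{r^2}$. *)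

theory Defs
  imports "HOL-Analysis.Analysis"
begin

definition besselI1 :: "real \<Rightarrow> real" where
  "besselI1 x = (\<Sum>k. (x / 2) ^ (2 * k + 1) / (fact k * fact (k + 1)))"

text \<open>Modified Bessel function of the second kind of order one
  (integral representation, valid for x > 0).\<close>
definition besselK1 :: "real \<Rightarrow> real" where
  "besselK1 x = integral {0..} (\<lambda>t. exp (- x * cosh t) * cosh t)"

text \<open>Green's function of the radial Helmholtz operator.\<close>
definition GreenG :: "real \<Rightarrow> real \<Rightarrow> real" where
  "GreenG r \<xi> = besselI1 (min r \<xi>) * besselK1 (max r \<xi>)"

definition peakonH :: "real \<Rightarrow> real \<Rightarrow> real \<Rightarrow> real" where
  "peakonH M p q = (1 / 2) * (p ^ 2 + M ^ 2 / q ^ 2) * GreenG q q"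

end

theory Submission
  imports Defs
begin

(* Energy conservation turns the Hamiltonian into the a priori bound M^2 Phi(q(t)) <= E, where
   Phi(x) = G(x,x) / x^2.  Writing I_1(x) = (x/2) 0F1(;2;x^2/4) and
   K_1(x) = int_0^oo exp(-x cosh t) cosh t dt gives
     Phi(x) = [exp(-x) 0F1(;2;x^2/4)] [exp(x) K_1(x)] / (2x),
   a product of two positive nonincreasing factors and 1/(2x).  Hence Phi is a continuous,
   strictly decreasing bijection of (0,oo) onto itself: it is at least K_1(1)/(2x) near 0 and at
   most e K_1(1)/(2x) for x >= 1.  The fixed-point equation for q_* says Phi(q_* ) = E/M^2, so it
   has exactly one solution, and Phi(q(t)) <= Phi(q_* ) forces q(t) >= q_*. *)


section \<open>The integrals of exp(-x cosh t) cosh^n t\<close>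

lemma power_le_exp_bound:
  fixes s :: real
  assumes "s \<ge> 0" "m > 0"
  shows "s ^ m \<le> real m ^ m * exp s"
proof -
  have "(s / real m) ^ m \<le> (1 + s / real m) ^ m"
    using assms by (intro power_mono) auto
  also have "\<dots> \<le> exp s"
    using assms by (intro exp_ge_one_plus_x_over_n_power_n) auto
  finally show ?thesis
    using assms by (simp add: power_divide field_simps)
qed

lemma exp_neg_cosh_bound:
  fixes x t :: real
  assumes x: "x > 0"
  shows "exp (- x * cosh t) * cosh t ^ n \<le> (2 * real (Suc n) ^ Suc n / x ^ Suc n) * exp (- t)"
proof -
  define c where "c = real (Suc n) ^ Suc n"
  have "(x * cosh t) ^ Suc n \<le> c * exp (x * cosh t)"
    unfolding c_def using x cosh_real_ge_1[of t] by (intro power_le_exp_bound) auto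
  hence bound: "exp (- x * cosh t) * cosh t ^ Suc n \<le> c / x ^ Suc n"
    using x by (simp add: field_simps power_mult_distrib exp_minus)
  have "exp (- x * cosh t) * cosh t ^ n * exp t \<le> exp (- x * cosh t) * cosh t ^ n * (2 * cosh t)"
    using cosh_real_ge_1[of t] by (intro mult_left_mono) (auto simp: cosh_def)
  also have "\<dots> = 2 * (exp (- x * cosh t) * cosh t ^ Suc n)"
    by simp
  also have "\<dots> \<le> 2 * c / x ^ Suc n"
    using bound by simp
  finally have "exp (- x * cosh t) * cosh t ^ n \<le> 2 * c / x ^ Suc n / exp t"
    by (simp only: pos_le_divide_eq[OF exp_gt_zero])
  thus ?thesis
    unfolding c_def by (simp add: exp_minus divide_inverse mult_ac)
qed

definition cosh_laplace :: "nat \<Rightarrow> real \<Rightarrow> real" where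
  "cosh_laplace n x = integral {0..} (\<lambda>t. exp (- x * cosh t) * cosh t ^ n)"

lemma besselK1_eq_cosh_laplace: "besselK1 = cosh_laplace 1"
  by (simp add: fun_eq_iff besselK1_def cosh_laplace_def)

lemma cosh_laplace_integrable:
  fixes x :: real
  assumes x: "x > 0"
  shows "(\<lambda>t. exp (- x * cosh t) * cosh t ^ n) integrable_on {0..}"
proof (rule measurable_bounded_by_integrable_imp_integrable)
  show "(\<lambda>t. exp (- x * cosh t) * cosh t ^ n) \<in> borel_measurable (lebesgue_on {0..})"
    by (intro continuous_imp_measurable_on_sets_lebesgue continuous_intros) auto
  show "(\<lambda>t. (2 * real (Suc n) ^ Suc n / x ^ Suc n) * exp (- 1 * t)) integrable_on {0..}"
    by (intro integrable_on_mult_right integrable_on_exp_minus_to_infinity) simp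
  show "norm (exp (- x * cosh t) * cosh t ^ n)
          \<le> (2 * real (Suc n) ^ Suc n / x ^ Suc n) * exp (- 1 * t)" for t
    using exp_neg_cosh_bound[OF x, of t n] by simp
qed auto

lemma cosh_laplace_pos:
  assumes x: "x > 0"
  shows "cosh_laplace n x > 0"
proof -
  let ?f = "\<lambda>t. exp (- x * cosh t) * cosh t ^ n"
  have on_unit: "?f integrable_on {0..1}"
    by (intro integrable_continuous_interval continuous_intros)
  have "exp (- x * cosh 1) = integral {0..1} (\<lambda>t::real. exp (- x * cosh 1))"
    by simp
  also have "\<dots> \<le> integral {0..1} ?f"
  proof (rule integral_le[OF _ on_unit])
    fix t :: real
    assume t: "t \<in> {0..1}"
    hence "exp (- x * cosh 1) \<le> exp (- x * cosh t)"
      using x by (simp add: cosh_real_nonneg_le_iff)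
    also have "\<dots> \<le> ?f t"
      using cosh_real_ge_1[of t] by (simp add: one_le_power)
    finally show "exp (- x * cosh 1) \<le> ?f t" .
  qed (intro integrable_continuous_interval continuous_intros)
  also have "\<dots> \<le> cosh_laplace n x"
    unfolding cosh_laplace_def
    by (intro integral_subset_le on_unit cosh_laplace_integrable x) auto
  finally show ?thesis
    by (rule less_le_trans[OF exp_gt_zero])
qed

lemma cosh_laplace_antimono:
  assumes x: "x > 0" and xy: "x \<le> y"
  shows "cosh_laplace n y \<le> cosh_laplace n x"
  unfolding cosh_laplace_def
proof (rule integral_le)
  fix t :: real
  have "y * cosh t \<ge> x * cosh t"
    using xy cosh_real_ge_1[of t] by (intro mult_right_mono) auto
  thus "exp (- y * cosh t) * cosh t ^ n \<le> exp (- x * cosh t) * cosh t ^ n"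
    using cosh_real_ge_1[of t] by (intro mult_right_mono) auto
next
  show "(\<lambda>t. exp (- y * cosh t) * cosh t ^ n) integrable_on {0..}"
    using x xy by (intro cosh_laplace_integrable) auto
  show "(\<lambda>t. exp (- x * cosh t) * cosh t ^ n) integrable_on {0..}"
    using x by (intro cosh_laplace_integrable)
qed

lemma exp_mult_cosh_laplace_antimono:
  assumes x: "x > 0" and xy: "x \<le> y"
  shows "exp y * cosh_laplace n y \<le> exp x * cosh_laplace n x"
proof -
  have eq: "exp z * cosh_laplace n z = integral {0..} (\<lambda>t. exp (z * (1 - cosh t)) * cosh t ^ n)"
    and int: "(\<lambda>t. exp (z * (1 - cosh t)) * cosh t ^ n) integrable_on {0..}"
    if "z > 0" for z
  proof -
    have shift: "(\<lambda>t. exp z * (exp (- z * cosh t) * cosh t ^ n)) = (\<lambda>t. exp (z * (1 - cosh t)) * cosh t ^ n)"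
      by (simp add: fun_eq_iff algebra_simps flip: exp_add)
    have "exp z * cosh_laplace n z = integral {0..} (\<lambda>t. exp z * (exp (- z * cosh t) * cosh t ^ n))"
      unfolding cosh_laplace_def by simp
    thus "exp z * cosh_laplace n z = integral {0..} (\<lambda>t. exp (z * (1 - cosh t)) * cosh t ^ n)"
      unfolding shift .
    have "(\<lambda>t. exp z * (exp (- z * cosh t) * cosh t ^ n)) integrable_on {0..}"
      by (intro integrable_on_mult_right cosh_laplace_integrable that)
    thus "(\<lambda>t. exp (z * (1 - cosh t)) * cosh t ^ n) integrable_on {0..}"
      unfolding shift .
  qed
  have "integral {0..} (\<lambda>t. exp (y * (1 - cosh t)) * cosh t ^ n)
          \<le> integral {0..} (\<lambda>t. exp (x * (1 - cosh t)) * cosh t ^ n)"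
  proof (rule integral_le)
    fix t :: real
    have "y * (1 - cosh t) \<le> x * (1 - cosh t)"
      using xy cosh_real_ge_1[of t] by (intro mult_right_mono_neg) auto
    thus "exp (y * (1 - cosh t)) * cosh t ^ n \<le> exp (x * (1 - cosh t)) * cosh t ^ n"
      using cosh_real_ge_1[of t] by (intro mult_right_mono) auto
  qed (use x xy int in auto)
  thus ?thesis
    using eq[of x] eq[of y] x xy by simp
qed

lemma cosh_laplace_diff_le:
  assumes a: "a > 0" and ax: "a \<le> x" and xy: "x \<le> y"
  shows "cosh_laplace n x - cosh_laplace n y \<le> (y - x) * cosh_laplace (Suc n) a"
proof -
  have x: "x > 0"
    using a ax by simp
  have "cosh_laplace n x - cosh_laplace n y
          = integral {0..} (\<lambda>t. (exp (- x * cosh t) - exp (- y * cosh t)) * cosh t ^ n)"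
    unfolding cosh_laplace_def left_diff_distrib
    using x xy by (intro integral_diff[symmetric] cosh_laplace_integrable) auto
  also have "\<dots> \<le> integral {0..} (\<lambda>t. (y - x) * (exp (- a * cosh t) * cosh t ^ Suc n))"
  proof (rule integral_le)
    show "(\<lambda>t. (exp (- x * cosh t) - exp (- y * cosh t)) * cosh t ^ n) integrable_on {0..}"
      unfolding left_diff_distrib using x xy by (intro integrable_diff cosh_laplace_integrable) auto
    show "(\<lambda>t. (y - x) * (exp (- a * cosh t) * cosh t ^ Suc n)) integrable_on {0..}"
      by (intro integrable_on_mult_right cosh_laplace_integrable a)
    fix t :: real
    have c: "cosh t \<ge> 1"
      by (rule cosh_real_ge_1)
    have "exp (- x * cosh t) - exp (- y * cosh t) = exp (- x * cosh t) * (1 - exp (- ((y - x) * cosh t)))"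
      by (simp add: algebra_simps flip: exp_add)
    also have "\<dots> \<le> exp (- x * cosh t) * ((y - x) * cosh t)"
      using exp_ge_add_one_self[of "- ((y - x) * cosh t)"] by (intro mult_left_mono) auto
    also have "\<dots> \<le> exp (- a * cosh t) * ((y - x) * cosh t)"
      using ax xy c by (intro mult_right_mono) (auto intro: mult_right_mono)
    finally have "(exp (- x * cosh t) - exp (- y * cosh t)) * cosh t ^ n
                    \<le> exp (- a * cosh t) * ((y - x) * cosh t) * cosh t ^ n"
      using c by (intro mult_right_mono) auto
    thus "(exp (- x * cosh t) - exp (- y * cosh t)) * cosh t ^ n
            \<le> (y - x) * (exp (- a * cosh t) * cosh t ^ Suc n)"
      by (simp add: mult_ac)
  qed
  also have "\<dots> = (y - x) * cosh_laplace (Suc n) a"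
    unfolding cosh_laplace_def by simp
  finally show ?thesis .
qed

lemma cosh_laplace_continuous_on:
  assumes a: "a > 0"
  shows "continuous_on {a..} (cosh_laplace n)"
proof (rule lipschitz_on_continuous_on)
  let ?L = "cosh_laplace (Suc n) a"
  have ordered: "dist (cosh_laplace n x) (cosh_laplace n y) \<le> ?L * dist x y"
    if "a \<le> x" "x \<le> y" for x y
    using cosh_laplace_antimono[of x y n] cosh_laplace_diff_le[OF a that, of n] that a
    by (simp add: dist_real_def mult.commute)
  show "?L-lipschitz_on {a..} (cosh_laplace n)"
  proof (rule lipschitz_onI)
    fix x y
    assume "x \<in> {a..}" "y \<in> {a..}"
    thus "dist (cosh_laplace n x) (cosh_laplace n y) \<le> ?L * dist x y"
      using ordered[of x y] ordered[of y x] by (cases "x \<le> y") (auto simp: dist_commute)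
  qed (use cosh_laplace_pos[OF a, of "Suc n"] in simp)
qed

section \<open>The power series of I_1\<close>

(* The coefficients of 0F1(;2;u) are 1 / ((2)_k k!) = 1 / (k! (k+1)!). *)
definition hyper0F1_2_coeff :: "nat \<Rightarrow> real" where
  "hyper0F1_2_coeff k = 1 / (fact k * fact (Suc k))"

definition hyper0F1_2 :: "real \<Rightarrow> real" where
  "hyper0F1_2 u = (\<Sum>k. hyper0F1_2_coeff k * u ^ k)"

lemma hyper0F1_2_coeff_pos: "hyper0F1_2_coeff k > 0"
  by (simp add: hyper0F1_2_coeff_def)

lemma summable_hyper0F1_2: "summable (\<lambda>k. hyper0F1_2_coeff k * u ^ k)"
proof (rule summable_comparison_test)
  show "summable (\<lambda>k. inverse (fact k) * \<bar>u\<bar> ^ k)"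
    by (rule summable_exp)
  have "hyper0F1_2_coeff k \<le> inverse (fact k)" for k
    unfolding hyper0F1_2_coeff_def by (simp add: divide_simps del: fact_Suc)
  thus "\<exists>N. \<forall>k\<ge>N. norm (hyper0F1_2_coeff k * u ^ k) \<le> inverse (fact k) * \<bar>u\<bar> ^ k"
    using hyper0F1_2_coeff_pos
    by (auto simp: abs_mult power_abs abs_of_pos intro!: exI[of _ 0] mult_right_mono)
qed

lemma hyper0F1_2_has_real_derivative:
  "(hyper0F1_2 has_real_derivative (\<Sum>k. diffs hyper0F1_2_coeff k * u ^ k)) (at u)"
  unfolding hyper0F1_2_def by (intro termdiffs_strong_converges_everywhere summable_hyper0F1_2)

lemma hyper0F1_2_zero: "hyper0F1_2 0 = 1"
  unfolding hyper0F1_2_def powser_zero by (simp add: hyper0F1_2_coeff_def)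

lemma hyper0F1_2_ge_1:
  assumes "u \<ge> 0"
  shows "hyper0F1_2 u \<ge> 1"
proof -
  have "(\<Sum>k\<in>{0}. hyper0F1_2_coeff k * u ^ k) \<le> hyper0F1_2 u"
    unfolding hyper0F1_2_def using assms hyper0F1_2_coeff_pos
    by (intro sum_le_suminf summable_hyper0F1_2) (auto intro!: mult_nonneg_nonneg simp: less_imp_le)
  thus ?thesis
    by (simp add: hyper0F1_2_coeff_def)
qed

lemma besselI1_eq_hyper0F1_2: "besselI1 x = x / 2 * hyper0F1_2 (x ^ 2 / 4)"
proof -
  have "(\<lambda>k. (x / 2) ^ (2 * k + 1) / (fact k * fact (k + 1)))
          = (\<lambda>k. x / 2 * (hyper0F1_2_coeff k * (x ^ 2 / 4) ^ k))"
    by (simp add: fun_eq_iff hyper0F1_2_coeff_def power_add power_mult power_divide)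
  hence "besselI1 x = (\<Sum>k. x / 2 * (hyper0F1_2_coeff k * (x ^ 2 / 4) ^ k))"
    unfolding besselI1_def by simp
  also have "\<dots> = x / 2 * hyper0F1_2 (x ^ 2 / 4)"
    unfolding hyper0F1_2_def by (rule suminf_mult[OF summable_hyper0F1_2])
  finally show ?thesis .
qed

lemma continuous_on_hyper0F1_2: "continuous_on S hyper0F1_2"
  by (rule continuous_at_imp_continuous_on, rule ballI,
      rule DERIV_isCont[OF hyper0F1_2_has_real_derivative])

lemma continuous_on_besselI1: "continuous_on S besselI1"
  unfolding besselI1_eq_hyper0F1_2[abs_def]
  by (intro continuous_intros continuous_on_compose2[OF continuous_on_hyper0F1_2[of UNIV]]) auto

(* Since c_k = (k+1) (k+2) c_(k+1), the gap between the two sides is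
   c_(k+1) y^(2k) ((y - (k+1))^2 + k + 1) / 2. *)
lemma diffs_hyper0F1_2_term_le:
  fixes y :: real
  shows "y * (diffs hyper0F1_2_coeff k * (y ^ 2) ^ k)
           \<le> (hyper0F1_2_coeff k * (y ^ 2) ^ k + hyper0F1_2_coeff (Suc k) * (y ^ 2) ^ Suc k) / 2"
proof -
  define b where "b = hyper0F1_2_coeff (Suc k)"
  define w where "w = (y ^ 2) ^ k"
  have "hyper0F1_2_coeff k = (real k + 1) * (real k + 2) * b"
    unfolding b_def hyper0F1_2_coeff_def
    by (simp add: divide_simps del: fact_Suc) (simp add: algebra_simps)
  moreover have "diffs hyper0F1_2_coeff k = (real k + 1) * b"
    unfolding diffs_def b_def by simp
  moreover have "0 \<le> b * w * ((y - (real k + 1)) ^ 2 + (real k + 1))"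
    unfolding b_def w_def using hyper0F1_2_coeff_pos[of "Suc k"] by simp
  ultimately show ?thesis
    unfolding b_def[symmetric] w_def[symmetric] power_Suc2[of "y ^ 2" k] w_def[symmetric]
    by (simp add: power2_eq_square algebra_simps)
qed

lemma hyper0F1_2_deriv_le:
  fixes y :: real
  shows "y * (\<Sum>k. diffs hyper0F1_2_coeff k * (y ^ 2) ^ k) \<le> hyper0F1_2 (y ^ 2)"
proof -
  let ?a = "\<lambda>k. hyper0F1_2_coeff k * (y ^ 2) ^ k"
  have s: "summable ?a"
    by (rule summable_hyper0F1_2)
  hence s': "summable (\<lambda>k. ?a (Suc k))"
    by (subst summable_Suc_iff)
  have "y * (\<Sum>k. diffs hyper0F1_2_coeff k * (y ^ 2) ^ k)
          = (\<Sum>k. y * (diffs hyper0F1_2_coeff k * (y ^ 2) ^ k))"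
    by (intro suminf_mult[symmetric] termdiff_converges_all summable_hyper0F1_2)
  also have "\<dots> \<le> (\<Sum>k. (?a k + ?a (Suc k)) / 2)"
    using s s' by (intro suminf_le diffs_hyper0F1_2_term_le summable_mult termdiff_converges_all
        summable_hyper0F1_2 summable_divide summable_add) auto
  also have "\<dots> = ((\<Sum>k. ?a k) + (\<Sum>k. ?a (Suc k))) / 2"
    using suminf_divide[OF summable_add[OF s s'], of 2] suminf_add[OF s s'] by simp
  also have "\<dots> = hyper0F1_2 (y ^ 2) - hyper0F1_2_coeff 0 / 2"
    using suminf_split_head[OF s] unfolding hyper0F1_2_def by simp
  also have "\<dots> \<le> hyper0F1_2 (y ^ 2)"
    using hyper0F1_2_coeff_pos[of 0] by simp
  finally show ?thesis .
qed

lemma exp_neg_mult_hyper0F1_2_antimono: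
  assumes "x \<le> y"
  shows "exp (- y) * hyper0F1_2 (y ^ 2 / 4) \<le> exp (- x) * hyper0F1_2 (x ^ 2 / 4)"
proof (rule DERIV_nonpos_imp_nonincreasing[OF assms])
  fix z :: real
  define D where "D = (\<Sum>k. diffs hyper0F1_2_coeff k * (z ^ 2 / 4) ^ k)"
  have "((\<lambda>z. exp (- z) * hyper0F1_2 (z ^ 2 / 4)) has_real_derivative
          exp (- z) * (z / 2 * D - hyper0F1_2 (z ^ 2 / 4))) (at z)"
    unfolding D_def
    by (auto intro!: derivative_eq_intros DERIV_chain2[OF hyper0F1_2_has_real_derivative]
        simp: algebra_simps)
  moreover have "z / 2 * D \<le> hyper0F1_2 (z ^ 2 / 4)"
    using hyper0F1_2_deriv_le[of "z / 2"] unfolding D_def by (simp add: power_divide)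
  ultimately show "\<exists>D. ((\<lambda>z. exp (- z) * hyper0F1_2 (z ^ 2 / 4)) has_real_derivative D) (at z) \<and> D \<le> 0"
    by (intro exI conjI) (auto simp: mult_nonneg_nonpos)
qed

section \<open>The ratio G(x,x) / x^2\<close>

definition green_ratio :: "real \<Rightarrow> real" where
  "green_ratio x = GreenG x x / x ^ 2"

lemma green_ratio_eq_product:
  assumes x: "x > 0"
  shows "green_ratio x = (exp (- x) * hyper0F1_2 (x ^ 2 / 4)) * (exp x * cosh_laplace 1 x) / (2 * x)"
proof -
  have "green_ratio x = x / 2 * hyper0F1_2 (x ^ 2 / 4) * cosh_laplace 1 x / x ^ 2"
    by (simp add: green_ratio_def GreenG_def besselI1_eq_hyper0F1_2 besselK1_eq_cosh_laplace)
  thus ?thesis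
    using x by (simp add: power2_eq_square field_simps flip: exp_add)
qed

lemma GreenG_diag_pos:
  assumes x: "x > 0"
  shows "GreenG x x > 0"
  using x hyper0F1_2_ge_1[of "x ^ 2 / 4"] cosh_laplace_pos[OF x, of 1]
  by (simp add: GreenG_def besselI1_eq_hyper0F1_2 besselK1_eq_cosh_laplace)

lemma green_ratio_strict_antimono:
  assumes x: "0 < x" and xy: "x < y"
  shows "green_ratio y < green_ratio x"
proof -
  define P where "P z = exp (- z) * hyper0F1_2 (z ^ 2 / 4)" for z
  define Q where "Q z = exp z * cosh_laplace 1 z" for z
  have P_pos: "P z > 0" if "z \<ge> 0" for z
    unfolding P_def using hyper0F1_2_ge_1[of "z ^ 2 / 4"] that by simp
  have Q_pos: "Q z > 0" if "z > 0" for z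
    unfolding Q_def using cosh_laplace_pos[OF that, of 1] by simp
  have "green_ratio y = P y * Q y / (2 * y)"
    unfolding P_def Q_def using x xy by (intro green_ratio_eq_product) simp
  also have "\<dots> \<le> P x * Q x / (2 * y)"
  proof (intro divide_right_mono mult_mono)
    show "P y \<le> P x"
      unfolding P_def using xy by (intro exp_neg_mult_hyper0F1_2_antimono) simp
    show "Q y \<le> Q x"
      unfolding Q_def using x xy by (intro exp_mult_cosh_laplace_antimono) simp_all
  qed (use P_pos[of x] Q_pos[of y] x xy in auto)
  also have "\<dots> < P x * Q x / (2 * x)"
    using P_pos[of x] Q_pos[OF x] x xy by (intro divide_strict_left_mono mult_pos_pos) auto
  also have "\<dots> = green_ratio x"
    unfolding P_def Q_def using green_ratio_eq_product[OF x] by simp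
  finally show ?thesis .
qed

lemma green_ratio_le_iff:
  assumes "x > 0" "y > 0"
  shows "green_ratio x \<le> green_ratio y \<longleftrightarrow> y \<le> x"
  using green_ratio_strict_antimono[of x y] green_ratio_strict_antimono[of y x] assms
  by (cases x y rule: linorder_cases) auto

lemma green_ratio_continuous_on:
  assumes a: "a > 0"
  shows "continuous_on {a..b} green_ratio"
proof -
  have "continuous_on {a..b} (\<lambda>x. besselI1 x * cosh_laplace 1 x / x ^ 2)"
    using a by (intro continuous_intros continuous_on_besselI1
        continuous_on_subset[OF cosh_laplace_continuous_on[OF a]]) auto
  thus ?thesis
    unfolding green_ratio_def[abs_def] GreenG_def besselK1_eq_cosh_laplace by simp
qed

lemma green_ratio_lower_bound:
  assumes x: "0 < x" "x \<le> 1"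
  shows "cosh_laplace 1 1 / (2 * x) \<le> green_ratio x"
proof -
  have "1 * cosh_laplace 1 1 / (2 * x) \<le> hyper0F1_2 (x ^ 2 / 4) * cosh_laplace 1 x / (2 * x)"
    using x hyper0F1_2_ge_1[of "x ^ 2 / 4"] cosh_laplace_antimono[of x 1 1] cosh_laplace_pos[of 1 1]
    by (intro divide_right_mono mult_mono) auto
  also have "\<dots> = green_ratio x"
    using green_ratio_eq_product[of x] x by (simp add: field_simps flip: exp_add)
  finally show ?thesis
    by simp
qed

lemma green_ratio_upper_bound:
  assumes x: "1 \<le> x"
  shows "green_ratio x \<le> exp 1 * cosh_laplace 1 1 / (2 * x)"
proof -
  have P: "exp (- x) * hyper0F1_2 (x ^ 2 / 4) \<le> 1"
    using exp_neg_mult_hyper0F1_2_antimono[of 0 x] x by (simp add: hyper0F1_2_zero)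
  have Q: "exp x * cosh_laplace 1 x \<le> exp 1 * cosh_laplace 1 1"
    using x by (intro exp_mult_cosh_laplace_antimono) auto
  have "green_ratio x = (exp (- x) * hyper0F1_2 (x ^ 2 / 4)) * (exp x * cosh_laplace 1 x) / (2 * x)"
    using x by (intro green_ratio_eq_product) simp
  also have "\<dots> \<le> 1 * (exp 1 * cosh_laplace 1 1) / (2 * x)"
    using mult_mono[OF P Q] cosh_laplace_pos[of x 1] x by (intro divide_right_mono) auto
  finally show ?thesis
    by simp
qed

lemma green_ratio_eq_ex1:
  assumes c: "c > 0"
  shows "\<exists>!x. x > 0 \<and> green_ratio x = c"
proof -
  define K where "K = cosh_laplace 1 1"
  have K: "K > 0"
    unfolding K_def by (rule cosh_laplace_pos) simp
  define a where "a = min 1 (K / (2 * c))"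
  define b where "b = max 1 (exp 1 * K / (2 * c))"
  have a: "0 < a" "a \<le> 1" "a \<le> b"
    unfolding a_def b_def using K c by auto
  have "c \<le> K / (2 * a)"
    using a K c unfolding a_def by (auto simp: field_simps min_def)
  also have "\<dots> \<le> green_ratio a"
    unfolding K_def using a by (intro green_ratio_lower_bound) auto
  finally have "c \<le> green_ratio a" .
  moreover have "green_ratio b \<le> exp 1 * K / (2 * b)"
    unfolding K_def b_def by (intro green_ratio_upper_bound) simp
  moreover have "exp 1 * K / (2 * b) \<le> c"
    using K c unfolding b_def by (auto simp: field_simps max_def)
  ultimately obtain x where "a \<le> x" "green_ratio x = c"
    using IVT2'[of green_ratio b c a] green_ratio_continuous_on[OF a(1)] a(3) by auto
  hence x: "x > 0 \<and> green_ratio x = c"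
    using a by simp
  show ?thesis
  proof (rule ex1I[of _ x])
    fix y
    assume y: "y > 0 \<and> green_ratio y = c"
    have "y \<le> x"
      using green_ratio_le_iff[of x y] x y by simp
    moreover have "x \<le> y"
      using green_ratio_le_iff[of y x] x y by simp
    ultimately show "y = x"
      by simp
  qed (rule x)
qed

section \<open>Energy conservation and the collapse bound\<close>

lemma green_ratio_le_energy:
  assumes x: "x > 0" and M: "M \<noteq> 0"
  shows "green_ratio x \<le> (y ^ 2 + M ^ 2 / x ^ 2) * GreenG x x / M ^ 2"
proof -
  have "M ^ 2 / x ^ 2 * GreenG x x \<le> (y ^ 2 + M ^ 2 / x ^ 2) * GreenG x x"
    using GreenG_diag_pos[OF x] by (intro mult_right_mono) auto
  thus ?thesis
    using M by (simp add: green_ratio_def field_simps)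
qed

(* Hamilton's equation for p only provides a derivative of H in q; dividing by the positive kinetic
   factor shows that g itself is differentiable. *)
lemma hamiltonian_q_derivative:
  fixes H :: "real \<Rightarrow> real \<Rightarrow> real" and g :: "real \<Rightarrow> real"
  assumes H_eq: "\<And>y x. H y x = (1 / 2) * (y ^ 2 + M ^ 2 / x ^ 2) * g x"
    and M: "M \<noteq> 0" and Q: "Q > 0"
    and Dp: "((\<lambda>x. H P x) has_real_derivative Dp) (at Q)"
  obtains g' where "(g has_real_derivative g') (at Q)"
    and "Dp = - (M ^ 2 / Q ^ 3) * g Q + g' * ((1 / 2) * (P ^ 2 + M ^ 2 / Q ^ 2))"
proof -
  define w where "w x = (1 / 2) * (P ^ 2 + M ^ 2 / x ^ 2)" for x
  have w_pos: "w x > 0" if "x > 0" for x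
    unfolding w_def using that M by (simp add: add_nonneg_pos)
  have w': "(w has_real_derivative - (M ^ 2 / Q ^ 3)) (at Q)"
    unfolding w_def using Q
    by (auto intro!: derivative_eq_intros simp: field_simps power2_eq_square power3_eq_cube)
  have "((\<lambda>x. H P x / w x) has_real_derivative
          (Dp * w Q - H P Q * - (M ^ 2 / Q ^ 3)) / (w Q * w Q)) (at Q)"
    using w_pos[OF Q] by (intro DERIV_divide Dp w') auto
  hence "(g has_real_derivative (Dp * w Q - H P Q * - (M ^ 2 / Q ^ 3)) / (w Q * w Q)) (at Q)"
  proof (rule has_field_derivative_transform_within_open)
    fix x :: real
    assume "x \<in> {0<..}"
    thus "H P x / w x = g x"
      using w_pos[of x] unfolding H_eq w_def by simp
  qed (use Q in auto)
  then obtain g' where g': "(g has_real_derivative g') (at Q)"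
    by blast
  have "((\<lambda>x. w x * g x) has_real_derivative - (M ^ 2 / Q ^ 3) * g Q + g' * w Q) (at Q)"
    by (rule DERIV_mult[OF w' g'])
  moreover have "(\<lambda>x. w x * g x) = (\<lambda>x. H P x)"
    by (simp add: fun_eq_iff H_eq w_def)
  ultimately have "Dp = - (M ^ 2 / Q ^ 3) * g Q + g' * w Q"
    using Dp by (auto intro: DERIV_unique)
  thus ?thesis
    using g' that unfolding w_def by blast
qed

lemma hamiltonian_energy_constant:
  fixes H :: "real \<Rightarrow> real \<Rightarrow> real" and g q p :: "real \<Rightarrow> real"
  assumes H_eq: "\<And>y x. H y x = (1 / 2) * (y ^ 2 + M ^ 2 / x ^ 2) * g x"
    and M: "M \<noteq> 0" and T: "is_interval T"
    and q_pos: "\<forall>t\<in>T. q t > 0"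
    and ham_q: "\<forall>t\<in>T. \<exists>D. ((\<lambda>y. H y (q t)) has_real_derivative D) (at (p t))
                          \<and> (q has_real_derivative D) (at t)"
    and ham_p: "\<forall>t\<in>T. \<exists>D. ((\<lambda>x. H (p t) x) has_real_derivative D) (at (q t))
                          \<and> (p has_real_derivative (- D)) (at t)"
  shows "\<exists>c. \<forall>t\<in>T. ((p t) ^ 2 + M ^ 2 / (q t) ^ 2) * g (q t) = c"
proof (rule has_field_derivative_zero_constant)
  show "convex T"
    using T by (simp add: is_interval_convex)
  fix t
  assume t: "t \<in> T"
  define P where "P = p t"
  define Q where "Q = q t"
  have Q: "Q > 0"
    using q_pos t unfolding Q_def by auto
  obtain Dq where Dq: "((\<lambda>y. H y Q) has_real_derivative Dq) (at P)" and q': "(q has_real_derivative Dq) (at t)"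
    using ham_q t unfolding P_def Q_def by blast
  obtain Dp where Dp: "((\<lambda>x. H P x) has_real_derivative Dp) (at Q)" and p': "(p has_real_derivative (- Dp)) (at t)"
    using ham_p t unfolding P_def Q_def by blast
  have "((\<lambda>y. H y Q) has_real_derivative P * g Q) (at P)"
    unfolding H_eq by (auto intro!: derivative_eq_intros)
  hence Dq_eq: "Dq = P * g Q"
    using Dq by (rule DERIV_unique[rotated])
  obtain g' where g': "(g has_real_derivative g') (at Q)"
    and Dp_eq: "Dp = - (M ^ 2 / Q ^ 3) * g Q + g' * ((1 / 2) * (P ^ 2 + M ^ 2 / Q ^ 2))"
    using hamiltonian_q_derivative[OF H_eq M Q Dp] .
  have gq: "((\<lambda>s. g (q s)) has_real_derivative g' * Dq) (at t)"
    using DERIV_chain2[OF g'[unfolded Q_def] q'] unfolding Q_def by simp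
  have "((\<lambda>s. ((p s) ^ 2 + M ^ 2 / (q s) ^ 2) * g (q s)) has_real_derivative
          (2 * P * (- Dp) + M ^ 2 * (- (2 * Q * Dq) / (Q ^ 2) ^ 2)) * g Q
          + (P ^ 2 + M ^ 2 / Q ^ 2) * (g' * Dq)) (at t)"
    unfolding P_def Q_def using Q unfolding Q_def
    by (auto intro!: derivative_eq_intros p' q' gq simp: power2_eq_square)
  moreover have "(2 * P * (- Dp) + M ^ 2 * (- (2 * Q * Dq) / (Q ^ 2) ^ 2)) * g Q
                   + (P ^ 2 + M ^ 2 / Q ^ 2) * (g' * Dq) = 0"
    unfolding Dp_eq Dq_eq using Q by (simp add: field_simps power2_eq_square power3_eq_cube)
  ultimately show "((\<lambda>s. ((p s) ^ 2 + M ^ 2 / (q s) ^ 2) * g (q s)) has_real_derivative 0) (at t within T)"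
    by (auto intro: has_field_derivative_at_within)
qed

lemma eq_mult_sqrt_iff:
  fixes M E x g :: real
  assumes "M > 0" "E > 0" "x > 0" "g \<ge> 0"
  shows "x = M * sqrt (g / E) \<longleftrightarrow> g / x ^ 2 = E / M ^ 2"
proof -
  have "x = M * sqrt (g / E) \<longleftrightarrow> x ^ 2 = M ^ 2 * (g / E)"
  proof
    assume "x = M * sqrt (g / E)"
    thus "x ^ 2 = M ^ 2 * (g / E)"
      using assms by (simp add: power_mult_distrib)
  next
    assume sq: "x ^ 2 = M ^ 2 * (g / E)"
    have "x = sqrt (x ^ 2)"
      using assms by simp
    also have "\<dots> = sqrt (M ^ 2) * sqrt (g / E)"
      unfolding sq real_sqrt_mult ..
    also have "\<dots> = M * sqrt (g / E)"
      using assms by simp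
    finally show "x = M * sqrt (g / E)" .
  qed
  also have "\<dots> \<longleftrightarrow> g / x ^ 2 = E / M ^ 2"
    using assms by (auto simp: field_simps)
  finally show ?thesis .
qed

theorem proposition5:
  fixes M E :: real and q p :: "real \<Rightarrow> real" and T :: "real set" and t0 :: real
  assumes M_pos: "M > 0"
    and T_open: "open T" and T_int: "is_interval T" and t0_in: "t0 \<in> T"
    and q_pos: "\<forall>t\<in>T. q t > 0"
    and ham_q: "\<forall>t\<in>T. \<exists>D. ((\<lambda>y. peakonH M y (q t)) has_real_derivative D) (at (p t))
                          \<and> (q has_real_derivative D) (at t)"
    and ham_p: "\<forall>t\<in>T. \<exists>D. ((\<lambda>x. peakonH M (p t) x) has_real_derivative D) (at (q t))
                          \<and> (p has_real_derivative (- D)) (at t)"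
    and E_def: "E = ((p t0) ^ 2 + M ^ 2 / (q t0) ^ 2) * GreenG (q t0) (q t0)"
    and E_pos: "E > 0"
  shows "(\<exists>!qs. qs > 0 \<and> qs = M * sqrt (GreenG qs qs / E))
         \<and> (\<forall>qs. qs > 0 \<and> qs = M * sqrt (GreenG qs qs / E) \<longrightarrow> (\<forall>t\<in>T. q t \<ge> qs))"
proof -
  have H: "peakonH M y x = (1 / 2) * (y ^ 2 + M ^ 2 / x ^ 2) * GreenG x x" for y x
    by (simp add: peakonH_def)
  obtain c where c: "\<forall>t\<in>T. ((p t) ^ 2 + M ^ 2 / (q t) ^ 2) * GreenG (q t) (q t) = c"
    using hamiltonian_energy_constant[OF H _ T_int q_pos ham_q ham_p] M_pos by auto
  have ratio_le: "green_ratio (q t) \<le> E / M ^ 2" if t: "t \<in> T" for t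
    using green_ratio_le_energy[of "q t" M "p t"] c t t0_in E_def q_pos M_pos by auto
  have fixed_point_iff: "qs > 0 \<and> qs = M * sqrt (GreenG qs qs / E) \<longleftrightarrow> qs > 0 \<and> green_ratio qs = E / M ^ 2"
    for qs
  proof (rule conj_cong[OF refl])
    assume "qs > 0"
    thus "qs = M * sqrt (GreenG qs qs / E) \<longleftrightarrow> green_ratio qs = E / M ^ 2"
      unfolding green_ratio_def using GreenG_diag_pos[of qs] by (intro eq_mult_sqrt_iff M_pos E_pos) auto
  qed
  show ?thesis
    unfolding fixed_point_iff
  proof (intro conjI allI impI ballI)
    show "\<exists>!qs. qs > 0 \<and> green_ratio qs = E / M ^ 2"
      using E_pos M_pos by (intro green_ratio_eq_ex1) simp
    fix qs t
    assume qs: "qs > 0 \<and> green_ratio qs = E / M ^ 2" and t: "t \<in> T"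
    have "green_ratio (q t) \<le> green_ratio qs"
      using ratio_le[OF t] qs by simp
    thus "qs \<le> q t"
      using green_ratio_le_iff[of "q t" qs] qs q_pos t by blast
  qed
qed

end
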